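(* Let $C$ be a d-cone and let $C^*$ be the cone of all Scott-continuous linear functionals $\mu\colon C\to\overline{\mathbb{R}}_+$ (with pointwise operations), endowed with the weak$^*$ upper topology. Let $C_0$ be a d-dense subcone of $C$. Then for every sublinear functional $\varphi\colon C^*\to\overline{\mathbb{R}}_+$ which is lower semicontinuous with respect to the weak$^*$ upper topology and every $\mu\in C^*$, \[\varphi(\mu)=\sup\{\mu(x)\mid x\in C_0,\ \widehat x\le\varphi\},\] where $\widehat x\le\varphi$ means $\nu(x)\le\varphi(\nu)$ for all $\nu\in C^*$.
   Context: $\overline{\mathbb{R}}_+=[0,+\infty)\cup\{+\infty\}$ with its usual order and extended arithmetic ($r+\infty=+\infty$, $r\cdot\infty=\infty$ for $r>0$, $0\cdot\infty=0$), with the upper topology (open sets $\emptyset$, $\overline{\mathbb{R}}_+$, $]r,+\infty]$ for $r\in[0,\infty)$); lower semicontinuous means continuous for it. A cone is a commutative monoid with a scalar multiplication by $[0,\infty)$ satisfying $r(x+y)=rx+ry$, $(r+s)x=rx+sx$, $(rs)x=r(sx)$, $1x=x$, $0x=0$. A d-cone is a cone with a directed complete partial order such that addition and scalar multiplication $[0,\infty)\times C\to C$ are Scott-continuous (order preserving and preserving suprema of directed families). A d-subcone is a subcone closed under directed suprema in $C$; a subcone $C_0$ is d-dense if the only d-subcone of $C$ containing $C_0$ is $C$. Linear = additive and homogeneous ($\mu(rx)=r\mu(x)$, $r\in[0,\infty)$); sublinear = homogeneous and subadditive. For $x\in C$, $\widehat x\colon C^*\to\overline{\mathbb{R}}_+$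 is $\widehat x(\mu)=\mu(x)$. The weak$^*$ upper topology on $C^*$ is the coarsest topology making every $\widehat x$, $x\in C$, lower semicontinuous. $\sup\emptyset=0$. *)

theory Defs
  imports "HOL-Analysis.Analysis"
begin

definition directed :: "('a \<Rightarrow> 'a \<Rightarrow> bool) \<Rightarrow> 'a set \<Rightarrow> bool" where
  "directed le D \<longleftrightarrow> D \<noteq> {} \<and> (\<forall>x\<in>D. \<forall>y\<in>D. \<exists>z\<in>D. le x z \<and> le y z)"

definition lub_in :: "'a set \<Rightarrow> ('a \<Rightarrow> 'a \<Rightarrow> bool) \<Rightarrow> 'a set \<Rightarrow> 'a \<Rightarrow> bool" where
  "lub_in A le D s \<longleftrightarrow> s \<in> A \<and> (\<forall>x\<in>D. le x s) \<and>
     (\<forall>u\<in>A. (\<forall>x\<in>D. le x u) \<longrightarrow> le s u)"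

definition dsup :: "('a \<Rightarrow> 'a \<Rightarrow> bool) \<Rightarrow> 'a set \<Rightarrow> 'a" where
  "dsup le D = (THE s. lub_in UNIV le D s)"

definition dcpo :: "('a \<Rightarrow> 'a \<Rightarrow> bool) \<Rightarrow> bool" where
  "dcpo le \<longleftrightarrow> (\<forall>x. le x x) \<and> (\<forall>x y. le x y \<longrightarrow> le y x \<longrightarrow> x = y) \<and>
     (\<forall>x y z. le x y \<longrightarrow> le y z \<longrightarrow> le x z) \<and>
     (\<forall>D. directed le D \<longrightarrow> (\<exists>s. lub_in UNIV le D s))"

definition scott_cont_on ::
  "'a set \<Rightarrow> ('a \<Rightarrow> 'a \<Rightarrow> bool) \<Rightarrow> ('b \<Rightarrow> 'b \<Rightarrow> bool) \<Rightarrow> ('a \<Rightarrow> 'b) \<Rightarrow> bool" where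
  "scott_cont_on A leA leB f \<longleftrightarrow>
     (\<forall>x\<in>A. \<forall>y\<in>A. leA x y \<longrightarrow> leB (f x) (f y)) \<and>
     (\<forall>D s. D \<subseteq> A \<and> directed leA D \<and> lub_in A leA D s \<longrightarrow> lub_in UNIV leB (f ` D) (f s))"

definition prod_le :: "('a \<Rightarrow> 'a \<Rightarrow> bool) \<Rightarrow> ('b \<Rightarrow> 'b \<Rightarrow> bool) \<Rightarrow> 'a \<times> 'b \<Rightarrow> 'a \<times> 'b \<Rightarrow> bool" where
  "prod_le le1 le2 p q \<longleftrightarrow> le1 (fst p) (fst q) \<and> le2 (snd p) (snd q)"

(* Cones: the whole type 'a is the cone; scalars are restricted to [0,\<infinity>) *)
definition is_cone :: "('a \<Rightarrow> 'a \<Rightarrow> 'a) \<Rightarrow> 'a \<Rightarrow> (real \<Rightarrow> 'a \<Rightarrow> 'a) \<Rightarrow> bool" where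
  "is_cone add zero sm \<longleftrightarrow>
     (\<forall>x y z. add (add x y) z = add x (add y z)) \<and>
     (\<forall>x y. add x y = add y x) \<and>
     (\<forall>x. add x zero = x) \<and>
     (\<forall>r x y. r \<ge> 0 \<longrightarrow> sm r (add x y) = add (sm r x) (sm r y)) \<and>
     (\<forall>r s x. r \<ge> 0 \<longrightarrow> s \<ge> 0 \<longrightarrow> sm (r + s) x = add (sm r x) (sm s x)) \<and>
     (\<forall>r s x. r \<ge> 0 \<longrightarrow> s \<ge> 0 \<longrightarrow> sm (r * s) x = sm r (sm s x)) \<and>
     (\<forall>x. sm 1 x = x) \<and>
     (\<forall>x. sm 0 x = zero)"

definition is_dcone ::
  "('a \<Rightarrow> 'a \<Rightarrow> 'a) \<Rightarrow> 'a \<Rightarrow> (real \<Rightarrow> 'a \<Rightarrow> 'a) \<Rightarrow> ('a \<Rightarrow> 'a \<Rightarrow> bool) \<Rightarrow> bool" where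
  "is_dcone add zero sm le \<longleftrightarrow>
     is_cone add zero sm \<and> dcpo le \<and>
     scott_cont_on UNIV (prod_le le le) le (\<lambda>p. add (fst p) (snd p)) \<and>
     scott_cont_on ({r. r \<ge> 0} \<times> UNIV) (prod_le (\<le>) le) le (\<lambda>p. sm (fst p) (snd p))"

definition is_subcone ::
  "('a \<Rightarrow> 'a \<Rightarrow> 'a) \<Rightarrow> 'a \<Rightarrow> (real \<Rightarrow> 'a \<Rightarrow> 'a) \<Rightarrow> 'a set \<Rightarrow> bool" where
  "is_subcone add zero sm S \<longleftrightarrow> zero \<in> S \<and>
     (\<forall>x\<in>S. \<forall>y\<in>S. add x y \<in> S) \<and> (\<forall>r x. r \<ge> 0 \<longrightarrow> x \<in> S \<longrightarrow> sm r x \<in> S)"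

definition is_dsubcone ::
  "('a \<Rightarrow> 'a \<Rightarrow> 'a) \<Rightarrow> 'a \<Rightarrow> (real \<Rightarrow> 'a \<Rightarrow> 'a) \<Rightarrow> ('a \<Rightarrow> 'a \<Rightarrow> bool) \<Rightarrow> 'a set \<Rightarrow> bool" where
  "is_dsubcone add zero sm le S \<longleftrightarrow> is_subcone add zero sm S \<and>
     (\<forall>D. D \<subseteq> S \<and> directed le D \<longrightarrow> dsup le D \<in> S)"

definition d_dense ::
  "('a \<Rightarrow> 'a \<Rightarrow> 'a) \<Rightarrow> 'a \<Rightarrow> (real \<Rightarrow> 'a \<Rightarrow> 'a) \<Rightarrow> ('a \<Rightarrow> 'a \<Rightarrow> bool) \<Rightarrow> 'a set \<Rightarrow> bool" where
  "d_dense add zero sm le C0 \<longleftrightarrow>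
     (\<forall>S. is_dsubcone add zero sm le S \<and> C0 \<subseteq> S \<longrightarrow> S = UNIV)"

definition linear_fun ::
  "('a \<Rightarrow> 'a \<Rightarrow> 'a) \<Rightarrow> (real \<Rightarrow> 'a \<Rightarrow> 'a) \<Rightarrow> ('a \<Rightarrow> ennreal) \<Rightarrow> bool" where
  "linear_fun add sm \<mu> \<longleftrightarrow> (\<forall>x y. \<mu> (add x y) = \<mu> x + \<mu> y) \<and>
     (\<forall>r x. r \<ge> 0 \<longrightarrow> \<mu> (sm r x) = ennreal r * \<mu> x)"

definition dual_cone ::
  "('a \<Rightarrow> 'a \<Rightarrow> 'a) \<Rightarrow> (real \<Rightarrow> 'a \<Rightarrow> 'a) \<Rightarrow> ('a \<Rightarrow> 'a \<Rightarrow> bool) \<Rightarrow> ('a \<Rightarrow> ennreal) set" where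
  "dual_cone add sm le = {\<mu>. linear_fun add sm \<mu> \<and> scott_cont_on UNIV le (\<le>) \<mu>}"

definition upper_topology :: "ennreal topology" where
  "upper_topology = topology_generated_by (insert UNIV {{ennreal r<..} | r. r \<ge> 0})"

(* Weak* upper topology on Cstar: coarsest topology on Cstar making every \<mu> \<mapsto> \<mu> x
   lower semicontinuous, i.e. generated by Cstar and the preimages {\<mu>\<in>Cstar. r < \<mu> x} *)
definition weak_star_upper ::
  "('a \<Rightarrow> 'a \<Rightarrow> 'a) \<Rightarrow> (real \<Rightarrow> 'a \<Rightarrow> 'a) \<Rightarrow> ('a \<Rightarrow> 'a \<Rightarrow> bool) \<Rightarrow> ('a \<Rightarrow> ennreal) topology" where
  "weak_star_upper add sm le = topology_generated_by
     (insert (dual_cone add sm le)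
        {{\<mu> \<in> dual_cone add sm le. ennreal r < \<mu> x} | x r. r \<ge> 0})"

definition sublinear_on_dual ::
  "('a \<Rightarrow> 'a \<Rightarrow> 'a) \<Rightarrow> (real \<Rightarrow> 'a \<Rightarrow> 'a) \<Rightarrow> ('a \<Rightarrow> 'a \<Rightarrow> bool) \<Rightarrow> (('a \<Rightarrow> ennreal) \<Rightarrow> ennreal) \<Rightarrow> bool" where
  "sublinear_on_dual add sm le \<phi> \<longleftrightarrow>
     (\<forall>\<mu>\<in>dual_cone add sm le. \<forall>r::real. r \<ge> 0 \<longrightarrow>
        \<phi> (\<lambda>x. ennreal r * \<mu> x) = ennreal r * \<phi> \<mu>) \<and>
     (\<forall>\<mu>\<in>dual_cone add sm le. \<forall>\<nu>\<in>dual_cone add sm le.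
        \<phi> (\<lambda>x. \<mu> x + \<nu> x) \<le> \<phi> \<mu> + \<phi> \<nu>)"

end

theory Submission
  imports Defs
begin

text \<open>The inequality \<open>\<ge>\<close> is immediate. For \<open>\<le>\<close>, fix a real \<open>r < \<phi> \<mu>\<close>. The set
  \<open>{\<nu>. r < \<phi> \<nu>}\<close> is open for the weak* upper topology, and d-density of \<open>C0\<close> shows that
  this topology is already generated by the evaluations at points of \<open>C0\<close>: the points all of
  whose superlevel sets are open for the coarser topology form a d-subcone. So \<open>\<mu>\<close> has a neighbourhood
  \<open>{\<nu>. \<forall>y\<in>Y. r < \<nu> y}\<close> inside \<open>{\<nu>. r < \<phi> \<nu>}\<close>, with \<open>Y \<subseteq> C0\<close> finite, and by homogeneity
  every \<open>\<nu>\<close> then satisfies \<open>\<nu> y \<le> \<phi> \<nu>\<close> for some \<open>y \<in> Y\<close>. A minimax argument (a two-point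
  lemma, iterated by induction on \<open>Y\<close>) merges the points of \<open>Y\<close> into one convex combination
  \<open>x \<in> C0\<close> with \<open>\<nu> x \<le> \<phi> \<nu>\<close> for all \<open>\<nu>\<close> and still \<open>r < \<mu> x\<close>.\<close>

section \<open>Scott-continuous linear functionals\<close>

lemma lub_in_ennreal_iff: "lub_in UNIV (\<le>) A (s::ennreal) \<longleftrightarrow> s = Sup A"
  unfolding lub_in_def by (auto intro: Sup_upper Sup_least antisym)

lemma dsup_lub_in:
  assumes "dcpo le" "directed le A"
  shows "lub_in UNIV le A (dsup le A)"
proof -
  obtain s where s: "lub_in UNIV le A s"
    using assms unfolding dcpo_def by blast
  have "t = s" if t: "lub_in UNIV le A t" for t
  proof -
    have "le s t" "le t s"
      using s t unfolding lub_in_def by blast+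
    then show ?thesis
      using assms(1) unfolding dcpo_def by blast
  qed
  with s show ?thesis
    unfolding dsup_def by (rule theI)
qed

lemma is_subcone_add: "is_subcone add zero sm S \<Longrightarrow> x \<in> S \<Longrightarrow> y \<in> S \<Longrightarrow> add x y \<in> S"
  unfolding is_subcone_def by blast

lemma is_subcone_sm: "is_subcone add zero sm S \<Longrightarrow> r \<ge> 0 \<Longrightarrow> x \<in> S \<Longrightarrow> sm r x \<in> S"
  unfolding is_subcone_def by blast

lemma dual_cone_add:
  "\<mu> \<in> dual_cone add sm le \<Longrightarrow> \<mu> (add x y) = \<mu> x + \<mu> y"
  unfolding dual_cone_def linear_fun_def by auto

lemma dual_cone_sm:
  "\<mu> \<in> dual_cone add sm le \<Longrightarrow> r \<ge> 0 \<Longrightarrow> \<mu> (sm r x) = ennreal r * \<mu> x"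
  unfolding dual_cone_def linear_fun_def by auto

lemma dual_cone_zero:
  assumes "is_cone add zero sm" "\<mu> \<in> dual_cone add sm le"
  shows "\<mu> zero = 0"
proof -
  have "zero = sm 0 zero"
    using assms(1) unfolding is_cone_def by simp
  then show ?thesis
    using dual_cone_sm[OF assms(2), of 0 zero] by simp
qed

lemma dual_cone_mono:
  "\<mu> \<in> dual_cone add sm le \<Longrightarrow> le x y \<Longrightarrow> \<mu> x \<le> \<mu> y"
  unfolding dual_cone_def scott_cont_on_def by auto

lemma dual_cone_dsup:
  assumes "\<mu> \<in> dual_cone add sm le" "dcpo le" "directed le A"
  shows "\<mu> (dsup le A) = (SUP a\<in>A. \<mu> a)"
  using assms dsup_lub_in[OF assms(2,3)]
  unfolding dual_cone_def scott_cont_on_def lub_in_ennreal_iff by blast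

lemma dual_cone_scale:
  assumes "\<mu> \<in> dual_cone add sm le" "c \<ge> 0"
  shows "(\<lambda>x. ennreal c * \<mu> x) \<in> dual_cone add sm le"
proof -
  have "linear_fun add sm (\<lambda>x. ennreal c * \<mu> x)"
    using assms(1) unfolding dual_cone_def linear_fun_def
    by (simp add: distrib_left mult.left_commute)
  moreover have "scott_cont_on UNIV le (\<le>) (\<lambda>x. ennreal c * \<mu> x)"
    using assms(1) unfolding dual_cone_def scott_cont_on_def lub_in_ennreal_iff
    by (auto intro: mult_left_mono simp: SUP_mult_left_ennreal image_image)
  ultimately show ?thesis
    unfolding dual_cone_def by auto
qed

lemma dual_cone_plus:
  assumes \<mu>: "\<mu> \<in> dual_cone add sm le" and \<nu>: "\<nu> \<in> dual_cone add sm le"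
  shows "(\<lambda>x. \<mu> x + \<nu> x) \<in> dual_cone add sm le"
proof -
  have "linear_fun add sm (\<lambda>x. \<mu> x + \<nu> x)"
    using assms unfolding dual_cone_def linear_fun_def by (simp add: distrib_left add_ac)
  moreover have "scott_cont_on UNIV le (\<le>) (\<lambda>x. \<mu> x + \<nu> x)"
    unfolding scott_cont_on_def lub_in_ennreal_iff
  proof (intro conjI allI impI ballI)
    fix x y assume "le x y"
    then show "\<mu> x + \<nu> x \<le> \<mu> y + \<nu> y"
      using dual_cone_mono[OF \<mu>] dual_cone_mono[OF \<nu>] by (auto intro: add_mono)
  next
    fix A s assume A: "A \<subseteq> UNIV \<and> directed le A \<and> lub_in UNIV le A s"
    have "\<mu> s = (SUP a\<in>A. \<mu> a)" "\<nu> s = (SUP a\<in>A. \<nu> a)"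
      using A assms unfolding dual_cone_def scott_cont_on_def lub_in_ennreal_iff by blast+
    moreover have "(SUP a\<in>A. \<mu> a + \<nu> a) = (SUP a\<in>A. \<mu> a) + (SUP a\<in>A. \<nu> a)"
    proof (rule SUP_add_directed_ennreal)
      fix i j assume "i \<in> A" "j \<in> A"
      then obtain k where "k \<in> A" "le i k" "le j k"
        using A unfolding directed_def by blast
      then show "\<exists>k\<in>A. \<mu> i + \<nu> j \<le> \<mu> k + \<nu> k"
        using dual_cone_mono[OF \<mu>] dual_cone_mono[OF \<nu>] by (blast intro: add_mono)
    qed
    ultimately show "\<mu> s + \<nu> s = Sup ((\<lambda>x. \<mu> x + \<nu> x) ` A)"
      by simp
  qed
  ultimately show ?thesis
    unfolding dual_cone_def by auto
qed

lemma ennreal_less_mult_iff: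
  assumes "s > 0" "r \<ge> 0"
  shows "ennreal r < ennreal s * t \<longleftrightarrow> ennreal (r / s) < t"
proof (cases t)
  case (real u)
  then have "ennreal r < ennreal s * t \<longleftrightarrow> r < s * u"
    using assms by (simp add: ennreal_mult[symmetric] ennreal_less_iff)
  also have "\<dots> \<longleftrightarrow> r / s < u"
    using assms by (simp add: pos_divide_less_eq mult.commute)
  also have "\<dots> \<longleftrightarrow> ennreal (r / s) < t"
    using assms real by (simp add: ennreal_less_iff)
  finally show ?thesis .
qed (use assms in \<open>simp add: ennreal_mult_top\<close>)

lemma ennreal_less_add_iff:
  fixes u v :: ennreal
  assumes r: "r \<ge> 0"
  shows "ennreal r < u + v \<longleftrightarrow> ennreal r < u \<or> ennreal r < v \<or>
    (\<exists>a b. a \<ge> 0 \<and> b \<ge> 0 \<and> a + b = r \<and> ennreal a < u \<and> ennreal b < v)"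
proof
  assume lt: "ennreal r < u + v"
  show "ennreal r < u \<or> ennreal r < v \<or>
    (\<exists>a b. a \<ge> 0 \<and> b \<ge> 0 \<and> a + b = r \<and> ennreal a < u \<and> ennreal b < v)"
  proof (cases "u \<le> ennreal r \<and> v \<le> ennreal r")
    case True
    then obtain u' v' where u: "u = ennreal u'" "u' \<ge> 0" and v: "v = ennreal v'" "v' \<ge> 0"
      by (metis ennreal_cases ennreal_neq_top top.extremum_unique)
    have "r < u' + v'" "u' \<le> r" "v' \<le> r"
      using lt True u v r
      by (auto simp: ennreal_plus[symmetric] ennreal_less_iff simp del: ennreal_plus)
    then have "u' > 0" "v' > 0"
      by linarith+
    \<comment> \<open>split the threshold proportionally to the two values\<close>
    define \<theta> where "\<theta> = r / (u' + v')"
    have "0 \<le> \<theta>" "\<theta> < 1"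
      using \<open>r < u' + v'\<close> \<open>u' > 0\<close> \<open>v' > 0\<close> r by (auto simp: \<theta>_def)
    then have "\<theta> * u' < u'" "\<theta> * v' < v'" "\<theta> * u' \<ge> 0" "\<theta> * v' \<ge> 0"
      using \<open>u' > 0\<close> \<open>v' > 0\<close> by auto
    moreover have "\<theta> * u' + \<theta> * v' = r"
      using \<open>u' > 0\<close> \<open>v' > 0\<close> unfolding distrib_left[symmetric] \<theta>_def by simp
    ultimately show ?thesis
      using u v by (intro disjI2 exI[of _ "\<theta> * u'"] exI[of _ "\<theta> * v'"]) (simp add: ennreal_less_iff)
  qed auto
next
  show "ennreal r < u + v" if "ennreal r < u \<or> ennreal r < v \<or>
    (\<exists>a b. a \<ge> 0 \<and> b \<ge> 0 \<and> a + b = r \<and> ennreal a < u \<and> ennreal b < v)"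
    using that
  proof (elim disjE exE conjE)
    fix a b assume "a \<ge> 0" "b \<ge> 0" "a + b = r" "ennreal a < u" "ennreal b < v"
    then show ?thesis
      by (metis add_strict_mono ennreal_plus)
  qed (auto intro: order.strict_trans2 add_increasing add_increasing2)
qed

section \<open>The topology generated by a d-dense subcone\<close>

definition superlevel :: "('a \<Rightarrow> ennreal) set \<Rightarrow> 'a \<Rightarrow> real \<Rightarrow> ('a \<Rightarrow> ennreal) set" where
  "superlevel D x r = {\<nu>\<in>D. ennreal r < \<nu> x}"

definition dual_nbhd :: "('a \<Rightarrow> ennreal) set \<Rightarrow> ('a \<times> real) set \<Rightarrow> ('a \<Rightarrow> ennreal) set" where
  "dual_nbhd D F = {\<nu>\<in>D. \<forall>(x, r)\<in>F. ennreal r < \<nu> x}"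

text \<open>\<open>nbhd_open D C0 V\<close>: \<open>V\<close> is open for the coarsest topology on \<open>D\<close> making the
  evaluations at the points of \<open>C0\<close> (rather than of the whole cone) lower semicontinuous.\<close>
definition nbhd_open :: "('a \<Rightarrow> ennreal) set \<Rightarrow> 'a set \<Rightarrow> ('a \<Rightarrow> ennreal) set \<Rightarrow> bool" where
  "nbhd_open D C0 V \<longleftrightarrow>
     (\<forall>\<mu>\<in>V. \<exists>F. finite F \<and> F \<subseteq> C0 \<times> {0..} \<and> \<mu> \<in> dual_nbhd D F \<and> dual_nbhd D F \<subseteq> V)"

lemma nbhd_open_Union:
  "(\<And>V. V \<in> K \<Longrightarrow> nbhd_open D C0 V) \<Longrightarrow> nbhd_open D C0 (\<Union>K)"
  unfolding nbhd_open_def by (meson UnionE Union_upper order_trans)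

lemma nbhd_openE:
  assumes "nbhd_open D C0 V" "\<mu> \<in> V"
  obtains F where "finite F" "F \<subseteq> C0 \<times> {0..}" "\<mu> \<in> dual_nbhd D F" "dual_nbhd D F \<subseteq> V"
  using assms that unfolding nbhd_open_def by meson

lemma nbhd_open_empty: "nbhd_open D C0 {}"
  using nbhd_open_Union[of "{}"] by simp

lemma nbhd_open_Un:
  "nbhd_open D C0 V \<Longrightarrow> nbhd_open D C0 W \<Longrightarrow> nbhd_open D C0 (V \<union> W)"
  using nbhd_open_Union[of "{V, W}"] by auto

lemma nbhd_open_Int:
  assumes "nbhd_open D C0 V" "nbhd_open D C0 W"
  shows "nbhd_open D C0 (V \<inter> W)"
  unfolding nbhd_open_def
proof
  fix \<mu> assume "\<mu> \<in> V \<inter> W"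
  then have "\<mu> \<in> V" "\<mu> \<in> W"
    by auto
  obtain F where "finite F" "F \<subseteq> C0 \<times> {0..}" "\<mu> \<in> dual_nbhd D F" "dual_nbhd D F \<subseteq> V"
    using \<open>\<mu> \<in> V\<close> by (rule nbhd_openE[OF assms(1)])
  moreover obtain G where "finite G" "G \<subseteq> C0 \<times> {0..}" "\<mu> \<in> dual_nbhd D G" "dual_nbhd D G \<subseteq> W"
    using \<open>\<mu> \<in> W\<close> by (rule nbhd_openE[OF assms(2)])
  moreover have "dual_nbhd D (F \<union> G) = dual_nbhd D F \<inter> dual_nbhd D G"
    unfolding dual_nbhd_def by blast
  ultimately show "\<exists>H. finite H \<and> H \<subseteq> C0 \<times> {0..} \<and> \<mu> \<in> dual_nbhd D H \<and> dual_nbhd D H \<subseteq> V \<inter> W"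
    by (intro exI[of _ "F \<union> G"]) auto
qed

lemma nbhd_open_carrier: "nbhd_open D C0 D"
  unfolding nbhd_open_def dual_nbhd_def by (intro ballI exI[of _ "{}"]) auto

lemma nbhd_open_superlevel_basic:
  "x \<in> C0 \<Longrightarrow> r \<ge> 0 \<Longrightarrow> nbhd_open D C0 (superlevel D x r)"
  unfolding nbhd_open_def dual_nbhd_def superlevel_def
  by (intro ballI exI[of _ "{(x, r)}"]) auto

lemma superlevel_zero:
  assumes "is_cone add zero sm" "r \<ge> 0"
  shows "superlevel (dual_cone add sm le) zero r = {}"
  unfolding superlevel_def by (auto simp: dual_cone_zero[OF assms(1)])

lemma superlevel_add:
  assumes "r \<ge> 0"
  shows "superlevel (dual_cone add sm le) (add x y) r =
    superlevel (dual_cone add sm le) x r \<union> superlevel (dual_cone add sm le) y r \<union>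
    (\<Union>(a, b)\<in>{(a, b). a \<ge> 0 \<and> b \<ge> 0 \<and> a + b = r}.
       superlevel (dual_cone add sm le) x a \<inter> superlevel (dual_cone add sm le) y b)"
  using ennreal_less_add_iff[OF assms]
  unfolding superlevel_def by (auto simp: dual_cone_add)

lemma superlevel_sm:
  assumes "s > 0" "r \<ge> 0"
  shows "superlevel (dual_cone add sm le) (sm s x) r = superlevel (dual_cone add sm le) x (r / s)"
  using assms unfolding superlevel_def by (auto simp: dual_cone_sm ennreal_less_mult_iff)

lemma superlevel_dsup:
  assumes "dcpo le" "directed le A"
  shows "superlevel (dual_cone add sm le) (dsup le A) r =
    (\<Union>d\<in>A. superlevel (dual_cone add sm le) d r)"
  using assms unfolding superlevel_def by (auto simp: dual_cone_dsup less_SUP_iff)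

text \<open>The points \<open>x\<close> all of whose superlevel sets are \<open>nbhd_open\<close> form a d-subcone
  containing \<open>C0\<close>.\<close>
lemma nbhd_open_superlevel:
  assumes dcone: "is_dcone add zero sm le" and C0_dense: "d_dense add zero sm le C0" and r: "r \<ge> 0"
  shows "nbhd_open (dual_cone add sm le) C0 (superlevel (dual_cone add sm le) x r)"
proof -
  let ?D = "dual_cone add sm le"
  have cone: "is_cone add zero sm" and dcpo: "dcpo le"
    using dcone by (simp_all add: is_dcone_def)
  define S where "S = {x. \<forall>r\<ge>0. nbhd_open ?D C0 (superlevel ?D x r)}"
  have S_iff: "x \<in> S \<longleftrightarrow> (\<forall>r\<ge>0. nbhd_open ?D C0 (superlevel ?D x r))" for x
    unfolding S_def by simp
  have zero: "zero \<in> S"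
    unfolding S_iff using superlevel_zero[OF cone] by (simp add: nbhd_open_empty)
  have add: "add x y \<in> S" if "x \<in> S" "y \<in> S" for x y
    unfolding S_iff
  proof (intro allI impI)
    fix r :: real assume "r \<ge> 0"
    show "nbhd_open ?D C0 (superlevel ?D (add x y) r)"
      unfolding superlevel_add[OF \<open>r \<ge> 0\<close>] using that \<open>r \<ge> 0\<close> unfolding S_iff
      by (auto intro!: nbhd_open_Un nbhd_open_Union nbhd_open_Int)
  qed
  have sm: "sm s x \<in> S" if "s \<ge> 0" "x \<in> S" for s x
  proof (cases "s = 0")
    case True
    then show ?thesis
      using zero cone unfolding is_cone_def by simp
  next
    case False
    then show ?thesis
      using that unfolding S_iff by (simp add: superlevel_sm)
  qed
  have dsup: "dsup le A \<in> S" if A: "A \<subseteq> S" "directed le A" for A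
    unfolding S_iff
  proof (intro allI impI)
    fix r :: real assume "r \<ge> 0"
    have "nbhd_open ?D C0 (superlevel ?D d r)" if "d \<in> A" for d
      using subsetD[OF A(1) that] \<open>r \<ge> 0\<close> unfolding S_iff by blast
    then show "nbhd_open ?D C0 (superlevel ?D (dsup le A) r)"
      unfolding superlevel_dsup[OF dcpo A(2)] by (intro nbhd_open_Union) blast
  qed
  have "is_dsubcone add zero sm le S"
    unfolding is_dsubcone_def is_subcone_def by (simp add: zero add sm dsup)
  moreover have "C0 \<subseteq> S"
    using nbhd_open_superlevel_basic by (auto simp: S_iff)
  ultimately have "S = UNIV"
    using C0_dense unfolding d_dense_def by simp
  then have "x \<in> S"
    by simp
  then show ?thesis
    using r unfolding S_iff by blast
qed

lemma openin_weak_star_upper_nbhd_open: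
  assumes "is_dcone add zero sm le" "d_dense add zero sm le C0"
    and "openin (weak_star_upper add sm le) V"
  shows "nbhd_open (dual_cone add sm le) C0 V"
proof -
  let ?D = "dual_cone add sm le"
  have "generate_topology_on (insert ?D {superlevel ?D x r | x r. r \<ge> 0}) V"
    using assms(3) unfolding weak_star_upper_def openin_topology_generated_by_iff superlevel_def .
  then show ?thesis
  proof (induction rule: generate_topology_on.induct)
    case Empty
    show ?case
      by (rule nbhd_open_empty)
  next
    case (Int a b)
    show ?case
      using Int.IH by (rule nbhd_open_Int)
  next
    case (UN K)
    show ?case
      using UN.IH by (rule nbhd_open_Union)
  next
    case (Basis s)
    then show ?case
      using nbhd_open_carrier nbhd_open_superlevel[OF assms(1,2)] by blast
  qed
qed

lemma openin_weak_star_upper_superlevel: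
  assumes "continuous_map (weak_star_upper add sm le) upper_topology \<phi>" "r \<ge> 0"
  shows "openin (weak_star_upper add sm le) {\<nu>\<in>dual_cone add sm le. ennreal r < \<phi> \<nu>}"
proof -
  have "openin upper_topology {ennreal r<..}"
    unfolding upper_topology_def openin_topology_generated_by_iff
    using assms(2) by (intro generate_topology_on.Basis) blast
  then have "openin (weak_star_upper add sm le)
      {\<nu> \<in> topspace (weak_star_upper add sm le). \<phi> \<nu> \<in> {ennreal r<..}}"
    by (rule openin_continuous_map_preimage[OF assms(1)])
  moreover have "topspace (weak_star_upper add sm le) = dual_cone add sm le"
    unfolding weak_star_upper_def topology_generated_by_topspace by blast
  ultimately show ?thesis
    by simp
qed

lemma dual_nbhd_uniform_threshold:
  assumes C0: "is_subcone add zero sm C0" and F: "finite F" "F \<subseteq> C0 \<times> {0..}"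
    and \<mu>: "\<mu> \<in> dual_nbhd (dual_cone add sm le) F" and r: "r > 0"
  shows "\<exists>Y. finite Y \<and> Y \<subseteq> C0 \<and> (\<forall>y\<in>Y. ennreal r < \<mu> y) \<and>
    (\<forall>\<nu>\<in>dual_cone add sm le. (\<forall>y\<in>Y. ennreal r < \<nu> y) \<longrightarrow> \<nu> \<in> dual_nbhd (dual_cone add sm le) F)"
proof -
  let ?D = "dual_cone add sm le"
  have "\<exists>q. snd p < q \<and> ennreal q < \<mu> (fst p)" if "p \<in> F" for p
  proof -
    have "ennreal (snd p) < \<mu> (fst p)" "snd p \<ge> 0"
      using \<mu> F(2) that unfolding dual_nbhd_def by auto
    moreover obtain w where "ennreal (snd p) < w" "w < \<mu> (fst p)"
      using dense calculation(1) by blast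
    ultimately show ?thesis
      by (cases w rule: ennreal_cases) (auto simp: ennreal_less_iff)
  qed
  then obtain q where q: "\<And>p. p \<in> F \<Longrightarrow> snd p < q p \<and> ennreal (q p) < \<mu> (fst p)"
    by metis
  have q_pos: "q p > 0" if "p \<in> F" for p
    using q[OF that] F(2) that by force
  \<comment> \<open>rescaling each test point makes all thresholds equal to \<open>r\<close>\<close>
  define Y where "Y = (\<lambda>p. sm (r / q p) (fst p)) ` F"
  have eval_Y: "ennreal r < \<nu> (sm (r / q p) (fst p)) \<longleftrightarrow> ennreal (q p) < \<nu> (fst p)"
    if "\<nu> \<in> ?D" "p \<in> F" for \<nu> p
    using q_pos[OF that(2)] r dual_cone_sm[OF that(1)] ennreal_less_mult_iff[of "r / q p" r]
    by simp
  have "sm (r / q p) (fst p) \<in> C0" if "p \<in> F" for p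
    using is_subcone_sm[OF C0] q_pos[OF that] r F(2) that by auto
  then have "Y \<subseteq> C0"
    unfolding Y_def by blast
  moreover have "\<nu> \<in> dual_nbhd ?D F" if "\<nu> \<in> ?D" "\<forall>y\<in>Y. ennreal r < \<nu> y" for \<nu>
  proof -
    have "ennreal (snd p) < \<nu> (fst p)" if "p \<in> F" for p
    proof -
      have "ennreal (q p) < \<nu> (fst p)"
        using eval_Y[OF \<open>\<nu> \<in> ?D\<close> that] \<open>\<forall>y\<in>Y. ennreal r < \<nu> y\<close> that unfolding Y_def by blast
      then show ?thesis
        using q[OF that] by (meson ennreal_leI less_imp_le order.strict_trans1)
    qed
    then show ?thesis
      using \<open>\<nu> \<in> ?D\<close> unfolding dual_nbhd_def by auto
  qed
  moreover have "\<forall>y\<in>Y. ennreal r < \<mu> y"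
    using eval_Y q \<mu> unfolding Y_def dual_nbhd_def by auto
  moreover have "finite Y"
    unfolding Y_def using F(1) by simp
  ultimately show ?thesis
    by blast
qed

section \<open>A minimax lemma for cones of functionals\<close>

definition fun_cone :: "('a \<Rightarrow> ennreal) set \<Rightarrow> bool" where
  "fun_cone P \<longleftrightarrow> (\<forall>\<nu>1\<in>P. \<forall>\<nu>2\<in>P. (\<lambda>x. \<nu>1 x + \<nu>2 x) \<in> P) \<and>
     (\<forall>\<nu>\<in>P. \<forall>c::real. c > 0 \<longrightarrow> (\<lambda>x. ennreal c * \<nu> x) \<in> P)"

definition sublinear_on :: "('a \<Rightarrow> ennreal) set \<Rightarrow> (('a \<Rightarrow> ennreal) \<Rightarrow> ennreal) \<Rightarrow> bool" where
  "sublinear_on P \<phi> \<longleftrightarrow>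
     (\<forall>\<nu>\<in>P. \<forall>c::real. c > 0 \<longrightarrow> \<phi> (\<lambda>x. ennreal c * \<nu> x) = ennreal c * \<phi> \<nu>) \<and>
     (\<forall>\<nu>1\<in>P. \<forall>\<nu>2\<in>P. \<phi> (\<lambda>x. \<nu>1 x + \<nu>2 x) \<le> \<phi> \<nu>1 + \<phi> \<nu>2)"

lemma fun_cone_add: "fun_cone P \<Longrightarrow> \<nu>1 \<in> P \<Longrightarrow> \<nu>2 \<in> P \<Longrightarrow> (\<lambda>x. \<nu>1 x + \<nu>2 x) \<in> P"
  unfolding fun_cone_def by blast

lemma fun_cone_scale: "fun_cone P \<Longrightarrow> \<nu> \<in> P \<Longrightarrow> c > 0 \<Longrightarrow> (\<lambda>x. ennreal c * \<nu> x) \<in> P"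
  unfolding fun_cone_def by blast

lemma sublinear_on_scale:
  "sublinear_on P \<phi> \<Longrightarrow> \<nu> \<in> P \<Longrightarrow> c > 0 \<Longrightarrow> \<phi> (\<lambda>x. ennreal c * \<nu> x) = ennreal c * \<phi> \<nu>"
  unfolding sublinear_on_def by blast

lemma sublinear_on_add:
  "sublinear_on P \<phi> \<Longrightarrow> \<nu>1 \<in> P \<Longrightarrow> \<nu>2 \<in> P \<Longrightarrow> \<phi> (\<lambda>x. \<nu>1 x + \<nu>2 x) \<le> \<phi> \<nu>1 + \<phi> \<nu>2"
  unfolding sublinear_on_def by blast

lemma sublinear_on_subset: "sublinear_on P \<phi> \<Longrightarrow> K \<subseteq> P \<Longrightarrow> sublinear_on K \<phi>"
  unfolding sublinear_on_def by blast

lemma fun_cone_sublinear_less_eval: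
  assumes P: "fun_cone P" and \<phi>: "sublinear_on P \<phi>"
  shows "fun_cone {\<nu>\<in>P. \<phi> \<nu> < \<nu> g}"
  unfolding fun_cone_def
proof (intro conjI ballI allI impI)
  fix \<nu>1 \<nu>2 assume "\<nu>1 \<in> {\<nu>\<in>P. \<phi> \<nu> < \<nu> g}" "\<nu>2 \<in> {\<nu>\<in>P. \<phi> \<nu> < \<nu> g}"
  then have "\<nu>1 \<in> P" "\<nu>2 \<in> P" "\<phi> \<nu>1 + \<phi> \<nu>2 < \<nu>1 g + \<nu>2 g"
    by (auto intro: add_strict_mono)
  moreover from this(1,2) have "\<phi> (\<lambda>x. \<nu>1 x + \<nu>2 x) \<le> \<phi> \<nu>1 + \<phi> \<nu>2"
    by (rule sublinear_on_add[OF \<phi>])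
  ultimately show "(\<lambda>x. \<nu>1 x + \<nu>2 x) \<in> {\<nu>\<in>P. \<phi> \<nu> < \<nu> g}"
    using fun_cone_add[OF P] by (auto intro: le_less_trans)
next
  fix \<nu> and c :: real assume "\<nu> \<in> {\<nu>\<in>P. \<phi> \<nu> < \<nu> g}" "c > 0"
  then show "(\<lambda>x. ennreal c * \<nu> x) \<in> {\<nu>\<in>P. \<phi> \<nu> < \<nu> g}"
    using fun_cone_scale[OF P] sublinear_on_scale[OF \<phi>]
    by (auto intro: ennreal_mult_strict_left_mono)
qed

lemma minimax_two_points_infinite:
  assumes P: "fun_cone P" and \<phi>: "sublinear_on P \<phi>"
    and min_le: "\<forall>\<nu>\<in>P. min (\<nu> x1) (\<nu> x2) \<le> \<phi> \<nu>"
    and \<nu>0: "\<nu>0 \<in> P" "\<nu>0 x1 = top" "\<phi> \<nu>0 < top"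
    and \<omega>: "\<omega> \<in> P"
  shows "\<omega> x2 \<le> \<phi> \<omega>"
proof (rule ennreal_le_epsilon)
  fix \<epsilon> :: real assume "0 < \<epsilon>"
  obtain p0 where p0: "\<phi> \<nu>0 = ennreal p0" "p0 \<ge> 0"
    using \<nu>0(3) by (cases "\<phi> \<nu>0" rule: ennreal_cases) auto
  define e where "e = \<epsilon> / (p0 + 1)"
  have e: "e > 0" "e * p0 \<le> \<epsilon>"
    using \<open>0 < \<epsilon>\<close> p0(2) by (auto simp: e_def field_simps)
  \<comment> \<open>perturbing \<open>\<omega>\<close> by \<open>e \<nu>0\<close> makes the value at \<open>x1\<close> infinite
    at a cost of only \<open>e \<phi> \<nu>0\<close>\<close>
  define \<sigma> where "\<sigma> = (\<lambda>x. \<omega> x + ennreal e * \<nu>0 x)"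
  have e\<nu>0: "(\<lambda>x. ennreal e * \<nu>0 x) \<in> P"
    using fun_cone_scale[OF P \<nu>0(1) e(1)] .
  have "\<sigma> \<in> P"
    unfolding \<sigma>_def using fun_cone_add[OF P \<omega> e\<nu>0] .
  have "\<omega> x2 \<le> \<sigma> x2"
    by (simp add: \<sigma>_def)
  also have "\<dots> = min (\<sigma> x1) (\<sigma> x2)"
    using \<nu>0(2) e(1) by (simp add: \<sigma>_def ennreal_mult_top)
  also have "\<dots> \<le> \<phi> \<sigma>"
    using min_le \<open>\<sigma> \<in> P\<close> by blast
  also have "\<dots> \<le> \<phi> \<omega> + ennreal e * \<phi> \<nu>0"
    using sublinear_on_add[OF \<phi> \<omega> e\<nu>0] sublinear_on_scale[OF \<phi> \<nu>0(1) e(1)] by (simp add: \<sigma>_def)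
  also have "\<dots> \<le> \<phi> \<omega> + ennreal \<epsilon>"
    using e p0 by (simp add: ennreal_mult[symmetric] add_left_mono ennreal_leI)
  finally show "\<omega> x2 \<le> \<phi> \<omega> + ennreal \<epsilon>" .
qed

text \<open>Each \<open>\<nu>\<close> confines the weight \<open>t\<close> to an interval, \<open>[(g - p) / (g - f), 1]\<close> when \<open>f < g\<close>
  and \<open>[0, (p - g) / (f - g)]\<close> when \<open>g < f\<close>; the cross condition says that every lower end lies
  below every upper end, so the supremum of the lower ends is a common weight.\<close>
lemma convex_weight_real:
  fixes f g p :: "'b \<Rightarrow> real"
  assumes min_le: "\<And>\<nu>. \<nu> \<in> A \<Longrightarrow> min (f \<nu>) (g \<nu>) \<le> p \<nu>"
    and cross: "\<And>\<nu>1 \<nu>2. \<nu>1 \<in> A \<Longrightarrow> \<nu>2 \<in> A \<Longrightarrow> g \<nu>1 < f \<nu>1 \<Longrightarrow> f \<nu>2 < g \<nu>2 \<Longrightarrow>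
      (g \<nu>2 - p \<nu>2) * (f \<nu>1 - g \<nu>1) \<le> (p \<nu>1 - g \<nu>1) * (g \<nu>2 - f \<nu>2)"
  shows "\<exists>t. 0 \<le> t \<and> t \<le> 1 \<and> (\<forall>\<nu>\<in>A. t * f \<nu> + (1 - t) * g \<nu> \<le> p \<nu>)"
proof -
  define L where "L = insert 0 ((\<lambda>\<nu>. (g \<nu> - p \<nu>) / (g \<nu> - f \<nu>)) ` {\<nu>\<in>A. f \<nu> < g \<nu>})"
  define t where "t = Sup L"
  have L_le: "l \<le> u" if "l \<in> L" "0 \<le> u" "\<And>\<nu>. \<nu> \<in> A \<Longrightarrow> f \<nu> < g \<nu> \<Longrightarrow>
      (g \<nu> - p \<nu>) / (g \<nu> - f \<nu>) \<le> u" for l u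
    using that unfolding L_def by auto
  have f_le: "f \<nu> \<le> p \<nu>" if "\<nu> \<in> A" "f \<nu> < g \<nu>" for \<nu>
    using min_le[OF that(1)] that(2) by (simp add: min_def)
  have g_le: "g \<nu> \<le> p \<nu>" if "\<nu> \<in> A" "g \<nu> < f \<nu>" for \<nu>
    using min_le[OF that(1)] that(2) by (simp add: min_def)
  have L_le_1: "l \<le> 1" if "l \<in> L" for l
    using f_le by (intro L_le[OF that]) (auto simp: divide_le_eq_1)
  then have bdd: "bdd_above L"
    by (auto simp: bdd_above_def)
  have t01: "0 \<le> t" "t \<le> 1"
    unfolding t_def using bdd L_le_1
    by (auto intro: cSup_upper cSup_least simp: L_def)
  have lower: "(g \<nu> - p \<nu>) / (g \<nu> - f \<nu>) \<le> t" if "\<nu> \<in> A" "f \<nu> < g \<nu>" for \<nu>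
    unfolding t_def using that by (intro cSup_upper[OF _ bdd]) (auto simp: L_def)
  have upper: "t \<le> (p \<nu> - g \<nu>) / (f \<nu> - g \<nu>)" if "\<nu> \<in> A" "g \<nu> < f \<nu>" for \<nu>
    unfolding t_def
  proof (rule cSup_least)
    show "l \<le> (p \<nu> - g \<nu>) / (f \<nu> - g \<nu>)" if "l \<in> L" for l
    proof (rule L_le[OF that])
      show "0 \<le> (p \<nu> - g \<nu>) / (f \<nu> - g \<nu>)"
        using g_le[OF \<open>\<nu> \<in> A\<close> \<open>g \<nu> < f \<nu>\<close>] \<open>g \<nu> < f \<nu>\<close> by simp
      show "(g \<nu>2 - p \<nu>2) / (g \<nu>2 - f \<nu>2) \<le> (p \<nu> - g \<nu>) / (f \<nu> - g \<nu>)"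
        if "\<nu>2 \<in> A" "f \<nu>2 < g \<nu>2" for \<nu>2
        using cross[OF \<open>\<nu> \<in> A\<close> that(1) \<open>g \<nu> < f \<nu>\<close> that(2)] \<open>g \<nu> < f \<nu>\<close> that(2)
        by (simp add: divide_le_eq le_divide_eq mult.commute)
    qed
  qed (simp add: L_def)
  have "t * f \<nu> + (1 - t) * g \<nu> \<le> p \<nu>" if "\<nu> \<in> A" for \<nu>
  proof (cases "f \<nu>" "g \<nu>" rule: linorder_cases)
    case less
    then show ?thesis
      using lower[OF that less] by (simp add: divide_le_eq algebra_simps)
  next
    case equal
    then show ?thesis
      using min_le[OF that] by (simp add: algebra_simps)
  next
    case greater
    then show ?thesis
      using upper[OF that greater] by (simp add: le_divide_eq algebra_simps)
  qed
  then show ?thesis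
    using t01 by blast
qed

lemma minimax_two_points_finite:
  assumes P: "fun_cone P" and \<phi>: "sublinear_on P \<phi>"
    and min_le: "\<forall>\<nu>\<in>P. min (\<nu> x1) (\<nu> x2) \<le> \<phi> \<nu>"
    and finite_values: "\<And>\<nu>. \<nu> \<in> P \<Longrightarrow> \<phi> \<nu> < top \<Longrightarrow> \<nu> x1 < top \<and> \<nu> x2 < top"
  shows "\<exists>t. 0 \<le> t \<and> t \<le> 1 \<and> (\<forall>\<nu>\<in>P. ennreal t * \<nu> x1 + ennreal (1 - t) * \<nu> x2 \<le> \<phi> \<nu>)"
proof -
  define A where "A = {\<nu>\<in>P. \<phi> \<nu> < top}"
  define f where "f \<nu> = enn2real (\<nu> x1)" for \<nu> :: "'a \<Rightarrow> ennreal"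
  define g where "g \<nu> = enn2real (\<nu> x2)" for \<nu> :: "'a \<Rightarrow> ennreal"
  define p where "p \<nu> = enn2real (\<phi> \<nu>)" for \<nu> :: "'a \<Rightarrow> ennreal"
  have real: "\<nu> x1 = ennreal (f \<nu>)" "\<nu> x2 = ennreal (g \<nu>)" "\<phi> \<nu> = ennreal (p \<nu>)"
    "f \<nu> \<ge> 0" "g \<nu> \<ge> 0" "p \<nu> \<ge> 0" if "\<nu> \<in> A" for \<nu>
    using that finite_values unfolding A_def f_def g_def p_def by auto
  have "min (f \<nu>) (g \<nu>) \<le> p \<nu>" if "\<nu> \<in> A" for \<nu>
    using min_le real[OF that] that unfolding A_def by (auto simp: min_def split: if_splits)
  moreover have "(g \<nu>2 - p \<nu>2) * (f \<nu>1 - g \<nu>1) \<le> (p \<nu>1 - g \<nu>1) * (g \<nu>2 - f \<nu>2)"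
    if \<nu>1: "\<nu>1 \<in> A" "g \<nu>1 < f \<nu>1" and \<nu>2: "\<nu>2 \<in> A" "f \<nu>2 < g \<nu>2" for \<nu>1 \<nu>2
  proof -
    define a where "a = f \<nu>1 - g \<nu>1"
    define b where "b = g \<nu>2 - f \<nu>2"
    have "a > 0" "b > 0"
      using \<nu>1 \<nu>2 by (auto simp: a_def b_def)
    have "\<nu>1 \<in> P" "\<nu>2 \<in> P"
      using \<nu>1 \<nu>2 by (auto simp: A_def)
    \<comment> \<open>the combination \<open>\<omega>\<close> takes equal values at \<open>x1\<close> and \<open>x2\<close>\<close>
    define \<omega> where "\<omega> = (\<lambda>x. ennreal b * \<nu>1 x + ennreal a * \<nu>2 x)"
    have b\<nu>1: "(\<lambda>x. ennreal b * \<nu>1 x) \<in> P" and a\<nu>2: "(\<lambda>x. ennreal a * \<nu>2 x) \<in> P"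
      using fun_cone_scale[OF P] \<open>\<nu>1 \<in> P\<close> \<open>\<nu>2 \<in> P\<close> \<open>a > 0\<close> \<open>b > 0\<close> by auto
    have "\<omega> \<in> P"
      unfolding \<omega>_def using fun_cone_add[OF P b\<nu>1 a\<nu>2] .
    have "\<omega> x1 = ennreal (b * f \<nu>1 + a * f \<nu>2)" "\<omega> x2 = ennreal (b * g \<nu>1 + a * g \<nu>2)"
      using real[OF \<nu>1(1)] real[OF \<nu>2(1)] \<open>a > 0\<close> \<open>b > 0\<close>
      by (simp_all add: \<omega>_def ennreal_mult)
    moreover have "b * f \<nu>1 + a * f \<nu>2 = b * g \<nu>1 + a * g \<nu>2"
      by (simp add: a_def b_def algebra_simps)
    ultimately have "ennreal (b * g \<nu>1 + a * g \<nu>2) = min (\<omega> x1) (\<omega> x2)"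
      by simp
    also have "\<dots> \<le> \<phi> \<omega>"
      using min_le \<open>\<omega> \<in> P\<close> by blast
    also have "\<dots> \<le> \<phi> (\<lambda>x. ennreal b * \<nu>1 x) + \<phi> (\<lambda>x. ennreal a * \<nu>2 x)"
      unfolding \<omega>_def using sublinear_on_add[OF \<phi> b\<nu>1 a\<nu>2] .
    also have "\<dots> = ennreal (b * p \<nu>1 + a * p \<nu>2)"
      using sublinear_on_scale[OF \<phi>] \<open>\<nu>1 \<in> P\<close> \<open>\<nu>2 \<in> P\<close> real[OF \<nu>1(1)] real[OF \<nu>2(1)]
        \<open>a > 0\<close> \<open>b > 0\<close>
      by (simp add: ennreal_plus ennreal_mult)
    finally have le: "ennreal (b * g \<nu>1 + a * g \<nu>2) \<le> ennreal (b * p \<nu>1 + a * p \<nu>2)" .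
    have "0 \<le> b * p \<nu>1 + a * p \<nu>2"
      using real(6)[OF \<nu>1(1)] real(6)[OF \<nu>2(1)] \<open>a > 0\<close> \<open>b > 0\<close> by simp
    then have "b * g \<nu>1 + a * g \<nu>2 \<le> b * p \<nu>1 + a * p \<nu>2"
      using le by (simp only: ennreal_le_iff)
    then show ?thesis
      by (simp add: a_def b_def algebra_simps)
  qed
  ultimately obtain t where t: "0 \<le> t" "t \<le> 1" "\<forall>\<nu>\<in>A. t * f \<nu> + (1 - t) * g \<nu> \<le> p \<nu>"
    using convex_weight_real[of A f g p] by blast
  have "ennreal t * \<nu> x1 + ennreal (1 - t) * \<nu> x2 \<le> \<phi> \<nu>" if "\<nu> \<in> P" for \<nu>
  proof (cases "\<nu> \<in> A")
    case True
    have "ennreal t * \<nu> x1 + ennreal (1 - t) * \<nu> x2 = ennreal (t * f \<nu> + (1 - t) * g \<nu>)"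
      using t(1,2) real[OF True] by (simp add: ennreal_mult)
    also have "\<dots> \<le> \<phi> \<nu>"
      using t(3) real[OF True] True by (simp add: ennreal_leI)
    finally show ?thesis .
  qed (use that in \<open>simp add: A_def less_top[symmetric]\<close>)
  then show ?thesis
    using t(1,2) by blast
qed

lemma minimax_two_points:
  assumes P: "fun_cone P" and \<phi>: "sublinear_on P \<phi>"
    and min_le: "\<forall>\<nu>\<in>P. min (\<nu> x1) (\<nu> x2) \<le> \<phi> \<nu>"
  shows "\<exists>t. 0 \<le> t \<and> t \<le> 1 \<and> (\<forall>\<nu>\<in>P. ennreal t * \<nu> x1 + ennreal (1 - t) * \<nu> x2 \<le> \<phi> \<nu>)"
proof -
  have min_le': "\<forall>\<nu>\<in>P. min (\<nu> x2) (\<nu> x1) \<le> \<phi> \<nu>"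
    using min_le by (simp add: min.commute)
  consider (top1) \<nu>0 where "\<nu>0 \<in> P" "\<nu>0 x1 = top" "\<phi> \<nu>0 < top"
    | (top2) \<nu>0 where "\<nu>0 \<in> P" "\<nu>0 x2 = top" "\<phi> \<nu>0 < top"
    | (finite_values) "\<And>\<nu>. \<nu> \<in> P \<Longrightarrow> \<phi> \<nu> < top \<Longrightarrow> \<nu> x1 < top \<and> \<nu> x2 < top"
    using top.not_eq_extremum by blast
  then show ?thesis
  proof cases
    case top1
    then show ?thesis
      using minimax_two_points_infinite[OF P \<phi> min_le top1] by (intro exI[of _ 0]) simp
  next
    case top2
    then show ?thesis
      using minimax_two_points_infinite[OF P \<phi> min_le' top2] by (intro exI[of _ 1]) simp
  next
    case finite_values
    then show ?thesis
      by (rule minimax_two_points_finite[OF P \<phi> min_le])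
  qed
qed

lemma ennreal_less_convex_comb:
  assumes "0 \<le> t" "t \<le> 1" "ennreal r < a" "ennreal r < b"
  shows "ennreal r < ennreal t * a + ennreal (1 - t) * b"
proof -
  obtain w where w: "ennreal r < w" "w < min a b"
    using dense assms(3,4) by (metis min_less_iff_conj)
  have "w = (ennreal t + ennreal (1 - t)) * w"
    using assms(1,2) by (simp flip: ennreal_plus)
  also have "\<dots> \<le> ennreal t * a + ennreal (1 - t) * b"
    unfolding distrib_right using w(2) by (intro add_mono mult_left_mono) auto
  finally show ?thesis
    using w(1) by (rule order.strict_trans2[rotated])
qed

lemma linear_fun_convex_comb:
  assumes "linear_fun add sm \<nu>" "0 \<le> t" "t \<le> 1"
  shows "\<nu> (add (sm t x) (sm (1 - t) y)) = ennreal t * \<nu> x + ennreal (1 - t) * \<nu> y"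
  using assms unfolding linear_fun_def by simp

text \<open>Induction on \<open>Y\<close>: the functionals not dominated at the new point \<open>g\<close> form a smaller
  cone, and the two-point case merges \<open>g\<close> with the combination found for that cone.\<close>
lemma convex_combination_minorant:
  assumes C0: "is_subcone add zero sm C0" and \<mu>: "linear_fun add sm \<mu>"
    and Y: "finite Y" "Y \<noteq> {}" "Y \<subseteq> C0" "\<forall>y\<in>Y. ennreal r < \<mu> y"
    and P: "fun_cone P" "\<forall>\<nu>\<in>P. linear_fun add sm \<nu>" and \<phi>: "sublinear_on P \<phi>"
    and cover: "\<forall>\<nu>\<in>P. \<exists>y\<in>Y. \<nu> y \<le> \<phi> \<nu>"
  shows "\<exists>x\<in>C0. ennreal r < \<mu> x \<and> (\<forall>\<nu>\<in>P. \<nu> x \<le> \<phi> \<nu>)"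
  using Y P \<phi> cover
proof (induction Y arbitrary: P rule: finite_ne_induct)
  case (singleton y)
  then show ?case
    by blast
next
  case (insert g Y)
  define K where "K = {\<nu>\<in>P. \<phi> \<nu> < \<nu> g}"
  have "fun_cone K" "\<forall>\<nu>\<in>K. linear_fun add sm \<nu>" "sublinear_on K \<phi>"
    using fun_cone_sublinear_less_eval[OF insert.prems(3,5)] insert.prems(4)
      sublinear_on_subset[OF insert.prems(5)]
    unfolding K_def by auto
  moreover have "\<forall>\<nu>\<in>K. \<exists>y\<in>Y. \<nu> y \<le> \<phi> \<nu>"
    using insert.prems(6) unfolding K_def by (auto simp: not_le[symmetric])
  ultimately obtain x' where x': "x' \<in> C0" "ennreal r < \<mu> x'" "\<forall>\<nu>\<in>K. \<nu> x' \<le> \<phi> \<nu>"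
    using insert.IH insert.prems(1,2) by blast
  have "\<forall>\<nu>\<in>P. min (\<nu> x') (\<nu> g) \<le> \<phi> \<nu>"
    using x'(3) unfolding K_def by (auto simp: min_le_iff_disj not_less)
  then obtain t where t: "0 \<le> t" "t \<le> 1"
    "\<forall>\<nu>\<in>P. ennreal t * \<nu> x' + ennreal (1 - t) * \<nu> g \<le> \<phi> \<nu>"
    using minimax_two_points[OF insert.prems(3,5)] by blast
  define x where "x = add (sm t x') (sm (1 - t) g)"
  have "x \<in> C0"
    unfolding x_def using C0 x'(1) insert.prems(1) t(1,2)
    by (simp add: is_subcone_add is_subcone_sm)
  moreover have "ennreal r < \<mu> x"
    unfolding x_def linear_fun_convex_comb[OF \<mu> t(1,2)]
    using ennreal_less_convex_comb[OF t(1,2) x'(2)] insert.prems(2) by simp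
  moreover have "\<forall>\<nu>\<in>P. \<nu> x \<le> \<phi> \<nu>"
    unfolding x_def using t insert.prems(4) by (simp add: linear_fun_convex_comb)
  ultimately show ?case
    by blast
qed

text \<open>By homogeneity, a functional dominated by \<open>\<phi>\<close> at no point of \<open>Y\<close> could be rescaled to
  exceed \<open>r\<close> at all points of \<open>Y\<close> while keeping \<open>\<phi>\<close> below \<open>r\<close>.\<close>
lemma exists_eval_le_sublinear:
  assumes P: "fun_cone P" and \<phi>: "sublinear_on P \<phi>" and Y: "finite Y" "Y \<noteq> {}" and r: "r > 0"
    and above: "\<forall>\<nu>\<in>P. (\<forall>y\<in>Y. ennreal r < \<nu> y) \<longrightarrow> ennreal r < \<phi> \<nu>"
    and \<nu>: "\<nu> \<in> P"
  shows "\<exists>y\<in>Y. \<nu> y \<le> \<phi> \<nu>"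
proof (rule ccontr)
  assume "\<not> (\<exists>y\<in>Y. \<nu> y \<le> \<phi> \<nu>)"
  then have "\<phi> \<nu> < Min (\<nu> ` Y)"
    using Y by (simp add: not_le Min_gr_iff)
  then obtain w' where w': "\<phi> \<nu> < w'" "w' < Min (\<nu> ` Y)"
    using dense by blast
  then obtain w where w: "w' = ennreal w" "w > 0"
    using le_less_trans[OF zero_le w'(1)] by (cases w' rule: ennreal_cases) auto
  define c where "c = r / w"
  have "c > 0" "r / c = w" "c * w = r"
    using r w(2) by (auto simp: c_def)
  have "ennreal r < ennreal c * \<nu> y" if "y \<in> Y" for y
    using w' w Min_le[OF finite_imageI[OF Y(1)], of "\<nu> y" \<nu>] that
      ennreal_less_mult_iff[OF \<open>c > 0\<close>, of r] r \<open>r / c = w\<close>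
    by (auto intro: less_le_trans)
  then have "ennreal r < \<phi> (\<lambda>x. ennreal c * \<nu> x)"
    using above fun_cone_scale[OF P \<nu> \<open>c > 0\<close>] by simp
  also have "\<dots> = ennreal c * \<phi> \<nu>"
    using sublinear_on_scale[OF \<phi> \<nu> \<open>c > 0\<close>] .
  also have "\<dots> \<le> ennreal c * ennreal w"
    using w' w by (intro mult_left_mono) auto
  also have "\<dots> = ennreal r"
    using \<open>c > 0\<close> w(2) \<open>c * w = r\<close> by (simp flip: ennreal_mult)
  finally show False
    by simp
qed

section \<open>Sublinear functionals on the dual cone\<close>

lemma fun_cone_dual_cone: "fun_cone (dual_cone add sm le)"
  unfolding fun_cone_def using dual_cone_plus dual_cone_scale by (blast intro: less_imp_le)

lemma sublinear_on_dual_cone: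
  "sublinear_on_dual add sm le \<phi> \<Longrightarrow> sublinear_on (dual_cone add sm le) \<phi>"
  unfolding sublinear_on_dual_def sublinear_on_def by (blast intro: less_imp_le)

lemma exists_uniform_test_points:
  assumes dcone: "is_dcone add zero sm le" and C0: "is_subcone add zero sm C0"
    and C0_dense: "d_dense add zero sm le C0" and \<phi>: "sublinear_on_dual add sm le \<phi>"
    and cont: "continuous_map (weak_star_upper add sm le) upper_topology \<phi>"
    and \<mu>: "\<mu> \<in> dual_cone add sm le" and r: "r > 0" "ennreal r < \<phi> \<mu>"
  shows "\<exists>Y. finite Y \<and> Y \<noteq> {} \<and> Y \<subseteq> C0 \<and> (\<forall>y\<in>Y. ennreal r < \<mu> y) \<and>
    (\<forall>\<nu>\<in>dual_cone add sm le. (\<forall>y\<in>Y. ennreal r < \<nu> y) \<longrightarrow> ennreal r < \<phi> \<nu>)"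
proof -
  let ?D = "dual_cone add sm le"
  let ?U = "{\<nu>\<in>?D. ennreal r < \<phi> \<nu>}"
  have "nbhd_open ?D C0 ?U"
    using openin_weak_star_upper_superlevel[OF cont] r(1)
    by (intro openin_weak_star_upper_nbhd_open[OF dcone C0_dense]) auto
  moreover have "\<mu> \<in> ?U"
    using \<mu> r(2) by simp
  ultimately obtain F
    where F: "finite F" "F \<subseteq> C0 \<times> {0..}" "\<mu> \<in> dual_nbhd ?D F" "dual_nbhd ?D F \<subseteq> ?U"
    by (rule nbhd_openE)
  obtain Y where Y: "finite Y" "Y \<subseteq> C0" "\<forall>y\<in>Y. ennreal r < \<mu> y"
    and in_nbhd: "\<forall>\<nu>\<in>?D. (\<forall>y\<in>Y. ennreal r < \<nu> y) \<longrightarrow> \<nu> \<in> dual_nbhd ?D F"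
    using dual_nbhd_uniform_threshold[OF C0 F(1-3) r(1)] by blast
  have above: "\<forall>\<nu>\<in>?D. (\<forall>y\<in>Y. ennreal r < \<nu> y) \<longrightarrow> ennreal r < \<phi> \<nu>"
    using in_nbhd F(4) by blast
  have "Y \<noteq> {}"
  proof
    assume "Y = {}"
    \<comment> \<open>then even the zero functional would satisfy \<open>r < \<phi> 0 = 0\<close>\<close>
    have "(\<lambda>x. ennreal 0 * \<mu> x) \<in> ?D"
      using dual_cone_scale[OF \<mu>, of 0] by simp
    moreover have "\<phi> (\<lambda>x. ennreal 0 * \<mu> x) = 0"
      using \<phi> \<mu> unfolding sublinear_on_dual_def by (metis ennreal_0 mult_zero_left order_refl)
    ultimately show False
      using above \<open>Y = {}\<close> by fastforce
  qed
  with Y above show ?thesis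
    by blast
qed

lemma exists_minorant_in_C0:
  assumes "is_dcone add zero sm le" and C0: "is_subcone add zero sm C0"
    and "d_dense add zero sm le C0" and \<phi>: "sublinear_on_dual add sm le \<phi>"
    and "continuous_map (weak_star_upper add sm le) upper_topology \<phi>"
    and \<mu>: "\<mu> \<in> dual_cone add sm le" and z: "z < \<phi> \<mu>"
  shows "\<exists>x\<in>C0. z < \<mu> x \<and> (\<forall>\<nu>\<in>dual_cone add sm le. \<nu> x \<le> \<phi> \<nu>)"
proof -
  let ?D = "dual_cone add sm le"
  obtain w where w: "z < w" "w < \<phi> \<mu>"
    using dense z by blast
  then obtain r where r: "w = ennreal r" "r > 0"
    using le_less_trans[OF zero_le w(1)] by (cases w rule: ennreal_cases) auto
  have "ennreal r < \<phi> \<mu>"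
    using w(2) r(1) by simp
  then obtain Y where Y: "finite Y" "Y \<noteq> {}" "Y \<subseteq> C0" "\<forall>y\<in>Y. ennreal r < \<mu> y"
    and above: "\<forall>\<nu>\<in>?D. (\<forall>y\<in>Y. ennreal r < \<nu> y) \<longrightarrow> ennreal r < \<phi> \<nu>"
    using exists_uniform_test_points[OF assms(1-6) r(2)] by blast
  have "\<forall>\<nu>\<in>?D. \<exists>y\<in>Y. \<nu> y \<le> \<phi> \<nu>"
    using exists_eval_le_sublinear[OF fun_cone_dual_cone sublinear_on_dual_cone[OF \<phi>] Y(1,2) r(2)
        above]
    by blast
  then obtain x where "x \<in> C0" "ennreal r < \<mu> x" "\<forall>\<nu>\<in>?D. \<nu> x \<le> \<phi> \<nu>"
    using convex_combination_minorant[OF C0 _ Y fun_cone_dual_cone _ sublinear_on_dual_cone[OF \<phi>]] \<mu>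
    unfolding dual_cone_def by blast
  then show ?thesis
    using w r by (auto intro: less_trans)
qed

theorem corollary5p3:
  fixes add :: "'a \<Rightarrow> 'a \<Rightarrow> 'a" and zero :: 'a and sm :: "real \<Rightarrow> 'a \<Rightarrow> 'a"
    and le :: "'a \<Rightarrow> 'a \<Rightarrow> bool" and C0 :: "'a set"
    and \<phi> :: "('a \<Rightarrow> ennreal) \<Rightarrow> ennreal" and \<mu> :: "'a \<Rightarrow> ennreal"
  assumes "is_dcone add zero sm le"
    and "is_subcone add zero sm C0"
    and "d_dense add zero sm le C0"
    and "sublinear_on_dual add sm le \<phi>"
    and "continuous_map (weak_star_upper add sm le) upper_topology \<phi>"
    and "\<mu> \<in> dual_cone add sm le"
  shows "\<phi> \<mu> = Sup {\<mu> x | x. x \<in> C0 \<and> (\<forall>\<nu>\<in>dual_cone add sm le. \<nu> x \<le> \<phi> \<nu>)}"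
proof (rule antisym)
  show "\<phi> \<mu> \<le> Sup {\<mu> x | x. x \<in> C0 \<and> (\<forall>\<nu>\<in>dual_cone add sm le. \<nu> x \<le> \<phi> \<nu>)}"
    unfolding le_Sup_iff using exists_minorant_in_C0[OF assms] by blast
  show "Sup {\<mu> x | x. x \<in> C0 \<and> (\<forall>\<nu>\<in>dual_cone add sm le. \<nu> x \<le> \<phi> \<nu>)} \<le> \<phi> \<mu>"
    using assms(6) by (auto intro: Sup_least)
qed

end
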